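(* Let $D$ and $X$ be real vector spaces, let $M(\cdot,\cdot)$ and $N(\cdot,\cdot)$ be symmetric bilinear forms on $D$ with $M$ positive definite, let $b_G(\cdot,\cdot)$ be a symmetric positive semidefinite bilinear form on $X$, and let $T:D\to X$ be linear with $b_G(Tu,Tv)=M(u,v)$ for all $u,v\in D$. Let $v_1,\dots,v_n\in D$ and $w_1,\dots,w_n\in X$ satisfy $b_G(w_i,T\phi)=N(v_i,\phi)$ for all $\phi\in D$, $i=1,\dots,n$. Assume that for every $v\in\operatorname{span}\{v_1,\dots,v_n\}$ there exists $\tilde u\in D$ with $M(\tilde u,\phi)=N(v,\phi)$ for all $\phi\in D$. Define the $n\times n$ matrices $$A_0=(M(v_i,v_j))_{i,j},\quad A_1=(N(v_i,v_j))_{i,j},\quad A_2=(b_G(w_i,w_j))_{i,j},$$ assume $A_1$ is positive definite, and let $\Lambda_n$ be the largest eigenvalue of $A_0x=\Lambda A_1x$. If $\rho>\Lambda_n$ and $\rho>0$, then the matrix $B:=A_0-2\rho A_1+\rho^2A_2$ is positive definite. *)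

theory Defs
  imports "HOL-Analysis.Analysis"
begin

definition sym_form :: "('a \<Rightarrow> 'a \<Rightarrow> real) \<Rightarrow> bool" where
  "sym_form B \<longleftrightarrow> (\<forall>u v. B u v = B v u)"

definition pos_def_form :: "('a::real_vector \<Rightarrow> 'a \<Rightarrow> real) \<Rightarrow> bool" where
  "pos_def_form B \<longleftrightarrow> (\<forall>u. u \<noteq> 0 \<longrightarrow> B u u > 0)"

definition pos_semidef_form :: "('a \<Rightarrow> 'a \<Rightarrow> real) \<Rightarrow> bool" where
  "pos_semidef_form B \<longleftrightarrow> (\<forall>u. B u u \<ge> 0)"

definition pos_def_mat :: "real^'n^'n \<Rightarrow> bool" where
  "pos_def_mat A \<longleftrightarrow> transpose A = A \<and> (\<forall>x. x \<noteq> 0 \<longrightarrow> x \<bullet> (A *v x) > 0)"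

definition gen_eigenvalue :: "real^'n^'n \<Rightarrow> real^'n^'n \<Rightarrow> real \<Rightarrow> bool" where
  "gen_eigenvalue A0 A1 l \<longleftrightarrow> (\<exists>x. x \<noteq> 0 \<and> A0 *v x = l *\<^sub>R (A1 *v x))"

end

theory Submission
  imports Defs
begin

text \<open>Write \<open>V = \<Sum>\<^sub>j x\<^sub>j v\<^sub>j\<close>, \<open>W = \<Sum>\<^sub>j x\<^sub>j w\<^sub>j\<close> and let \<open>u\<close> be the
  \<open>M\<close>-representer of \<open>N V\<close>. Then \<open>x\<^sup>T B x = M V V - 2\<rho> N V V + \<rho>\<^sup>2 b\<^sub>G W W\<close>, and
  \<open>T u\<close> is the \<open>b\<^sub>G\<close>-orthogonal projection of \<open>W\<close> onto the range of \<open>T\<close>, so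
  \<open>b\<^sub>G W W \<ge> b\<^sub>G (T u) (T u) = M u u\<close>. Hence \<open>x\<^sup>T B x \<ge> M (V - \<rho> u) (V - \<rho> u) \<ge> 0\<close>,
  and equality forces \<open>V = \<rho> u\<close>, which makes \<open>\<rho>\<close> a generalized eigenvalue with
  eigenvector \<open>x\<close>, contradicting \<open>\<rho> > \<Lambda>\<^sub>n\<close>.\<close>

lemma bilinear_sum_left: "bilinear h \<Longrightarrow> h (sum f S) y = (\<Sum>i\<in>S. h (f i) y)"
  unfolding bilinear_def using linear_sum[of "\<lambda>x. h x y"] by (simp add: o_def)

lemma bilinear_sum_right: "bilinear h \<Longrightarrow> h x (sum g S) = (\<Sum>j\<in>S. h x (g j))"
  unfolding bilinear_def using linear_sum[of "h x"] by (simp add: o_def)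

lemma gram_matrix_mult_vec_nth:
  "bilinear F \<Longrightarrow> ((\<chi> i j. F (v i) (v j)) *v x) $ k = F (v k) (\<Sum>j\<in>UNIV. x $ j *\<^sub>R v j)"
  by (simp add: matrix_vector_mult_def bilinear_sum_right bilinear_rmul mult.commute)

lemma gram_matrix_quadratic_form:
  "bilinear F \<Longrightarrow>
    x \<bullet> ((\<chi> i j. F (v i) (v j)) *v x) = F (\<Sum>j\<in>UNIV. x $ j *\<^sub>R v j) (\<Sum>j\<in>UNIV. x $ j *\<^sub>R v j)"
  by (simp add: inner_vec_def gram_matrix_mult_vec_nth bilinear_sum_left bilinear_lmul)

lemma gram_matrix_combination_quadratic_form:
  assumes "bilinear F" "bilinear G" "bilinear H"
  shows "x \<bullet> (((\<chi> i j. F (v i) (v j)) - a *\<^sub>R (\<chi> i j. G (v i) (v j))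
                  + c *\<^sub>R (\<chi> i j. H (w i) (w j))) *v x)
    = F (\<Sum>j\<in>UNIV. x $ j *\<^sub>R v j) (\<Sum>j\<in>UNIV. x $ j *\<^sub>R v j)
      - a * G (\<Sum>j\<in>UNIV. x $ j *\<^sub>R v j) (\<Sum>j\<in>UNIV. x $ j *\<^sub>R v j)
      + c * H (\<Sum>j\<in>UNIV. x $ j *\<^sub>R w j) (\<Sum>j\<in>UNIV. x $ j *\<^sub>R w j)"
  by (simp add: matrix_vector_mult_diff_rdistrib matrix_vector_mult_add_rdistrib
      scaleR_matrix_vector_assoc[symmetric] inner_diff_right inner_add_right
      gram_matrix_quadratic_form assms)

lemma orthogonal_projection_form_le:
  assumes "bilinear bG" "sym_form bG" "pos_semidef_form bG"
    and image_form: "\<And>u z. bG (T u) (T z) = M u z"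
    and pairing: "\<And>\<phi>. bG W (T \<phi>) = M u \<phi>"
  shows "M u u \<le> bG W W"
proof -
  define E where "E = W - T u"
  have orthogonal: "bG E (T u) = 0"
    by (simp add: E_def bilinear_lsub[OF assms(1)] image_form pairing)
  have "bG W W = bG E E + 2 * bG E (T u) + bG (T u) (T u)"
    using assms(2) unfolding E_def sym_form_def
    by (simp add: bilinear_lsub[OF assms(1)] bilinear_rsub[OF assms(1)])
  moreover have "bG E E \<ge> 0"
    using assms(3) unfolding pos_semidef_form_def by blast
  ultimately show ?thesis
    using orthogonal image_form[of u u] by linarith
qed

lemma shifted_form_le_quadratic:
  assumes M: "bilinear M" "sym_form M"
    and "bilinear bG" "sym_form bG" "pos_semidef_form bG"
    and "\<And>u z. bG (T u) (T z) = M u z"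
    and "\<And>\<phi>. bG W (T \<phi>) = N V \<phi>"
    and representer: "\<And>\<phi>. M u \<phi> = N V \<phi>"
  shows "M (V - \<rho> *\<^sub>R u) (V - \<rho> *\<^sub>R u) \<le> M V V - 2 * \<rho> * N V V + \<rho>\<^sup>2 * bG W W"
proof -
  have "M u u \<le> bG W W"
    using assms(3-7) representer by (intro orthogonal_projection_form_le[where T = T]) auto
  then have "\<rho>\<^sup>2 * M u u \<le> \<rho>\<^sup>2 * bG W W"
    by (simp add: mult_left_mono)
  moreover have "M V u = N V V"
    using M(2) representer unfolding sym_form_def by metis
  then have "M (V - \<rho> *\<^sub>R u) (V - \<rho> *\<^sub>R u) = M V V - 2 * \<rho> * N V V + \<rho>\<^sup>2 * M u u"
    by (simp add: bilinear_lsub[OF M(1)] bilinear_rsub[OF M(1)] bilinear_lmul[OF M(1)]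
        bilinear_rmul[OF M(1)] representer power2_eq_square algebra_simps)
  ultimately show ?thesis
    by linarith
qed

lemma gen_eigenvalue_of_representer:
  assumes M: "bilinear M" "sym_form M" and N: "bilinear N" "sym_form N"
    and representer: "\<And>\<phi>. M u \<phi> = N (\<Sum>j\<in>UNIV. x $ j *\<^sub>R v j) \<phi>"
    and eigen: "(\<Sum>j\<in>UNIV. x $ j *\<^sub>R v j) = \<rho> *\<^sub>R u"
    and "x \<noteq> 0"
  shows "gen_eigenvalue (\<chi> i j. M (v i) (v j)) (\<chi> i j. N (v i) (v j)) \<rho>"
proof -
  let ?V = "\<Sum>j\<in>UNIV. x $ j *\<^sub>R v j"
  have "((\<chi> i j. M (v i) (v j)) *v x) $ k = (\<rho> *\<^sub>R ((\<chi> i j. N (v i) (v j)) *v x)) $ k" for k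
  proof -
    have "((\<chi> i j. M (v i) (v j)) *v x) $ k = M (v k) ?V"
      by (rule gram_matrix_mult_vec_nth[OF M(1)])
    also have "\<dots> = \<rho> * M u (v k)"
      using M(2) unfolding sym_form_def by (simp add: eigen bilinear_rmul[OF M(1)])
    also have "\<dots> = \<rho> * N (v k) ?V"
      using N(2) unfolding sym_form_def by (simp add: representer)
    finally show ?thesis
      by (simp add: gram_matrix_mult_vec_nth[OF N(1)])
  qed
  then show ?thesis
    unfolding gen_eigenvalue_def using \<open>x \<noteq> 0\<close> by (auto simp: vec_eq_iff)
qed

theorem lemma4p3:
  fixes M N :: "'d::real_vector \<Rightarrow> 'd \<Rightarrow> real"
    and bG :: "'x::real_vector \<Rightarrow> 'x \<Rightarrow> real"
    and T :: "'d \<Rightarrow> 'x"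
    and v :: "'n::finite \<Rightarrow> 'd"
    and w :: "'n \<Rightarrow> 'x"
    and \<Lambda> \<rho> :: real
  assumes "bilinear M" "sym_form M" "pos_def_form M"
    and "bilinear N" "sym_form N"
    and "bilinear bG" "sym_form bG" "pos_semidef_form bG"
    and "linear T"
    and "\<forall>u z. bG (T u) (T z) = M u z"
    and "\<forall>i \<phi>. bG (w i) (T \<phi>) = N (v i) \<phi>"
    and "\<forall>z \<in> span (range v). \<exists>u. \<forall>\<phi>. M u \<phi> = N z \<phi>"
    and "pos_def_mat (\<chi> i j. N (v i) (v j))"
    and "gen_eigenvalue (\<chi> i j. M (v i) (v j)) (\<chi> i j. N (v i) (v j)) \<Lambda>"
    and "\<forall>\<mu>. gen_eigenvalue (\<chi> i j. M (v i) (v j)) (\<chi> i j. N (v i) (v j)) \<mu> \<longrightarrow> \<mu> \<le> \<Lambda>"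
    and "\<rho> > \<Lambda>" "\<rho> > 0"
  shows "pos_def_mat ((\<chi> i j. M (v i) (v j)) - (2 * \<rho>) *\<^sub>R (\<chi> i j. N (v i) (v j))
                      + (\<rho>^2) *\<^sub>R (\<chi> i j. bG (w i) (w j)))"
proof -
  let ?B = "(\<chi> i j. M (v i) (v j)) - (2 * \<rho>) *\<^sub>R (\<chi> i j. N (v i) (v j))
            + (\<rho>^2) *\<^sub>R (\<chi> i j. bG (w i) (w j))"
  have "transpose ?B = ?B"
    using assms(2,5,7) unfolding sym_form_def by (simp add: vec_eq_iff transpose_def)
  moreover have "x \<bullet> (?B *v x) > 0" if "x \<noteq> 0" for x
  proof -
    define V where "V = (\<Sum>j\<in>UNIV. x $ j *\<^sub>R v j)"
    define W where "W = (\<Sum>j\<in>UNIV. x $ j *\<^sub>R w j)"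
    have "V \<in> span (range v)"
      unfolding V_def by (intro span_sum span_scale span_base) auto
    then obtain u where representer: "\<And>\<phi>. M u \<phi> = N V \<phi>"
      using assms(12) by blast
    have "\<And>\<phi>. bG W (T \<phi>) = N V \<phi>"
      using assms(11) by (simp add: W_def V_def bilinear_sum_left[OF assms(6)]
          bilinear_sum_left[OF assms(4)] bilinear_lmul[OF assms(6)] bilinear_lmul[OF assms(4)])
    then have "M (V - \<rho> *\<^sub>R u) (V - \<rho> *\<^sub>R u) \<le> x \<bullet> (?B *v x)"
      using shifted_form_le_quadratic[of M bG T W N V u \<rho>] assms(1,2,6-8,10) representer
      by (simp add: gram_matrix_combination_quadratic_form assms(1,4,6) V_def W_def)
    moreover have "V \<noteq> \<rho> *\<^sub>R u"
      using gen_eigenvalue_of_representer[OF assms(1,2,4,5)] representer \<open>x \<noteq> 0\<close> assms(15,16)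
      unfolding V_def by force
    then have "M (V - \<rho> *\<^sub>R u) (V - \<rho> *\<^sub>R u) > 0"
      using assms(3) unfolding pos_def_form_def by simp
    ultimately show ?thesis
      by linarith
  qed
  ultimately show ?thesis
    unfolding pos_def_mat_def by blast
qed

end
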